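(* Let $p\geq 2$ and let $h\in C^2(\mathbb{R}^n)$ be nonnegative, positively homogeneous of degree $p$, with $\lambda|v|^2\leq\langle D^2h(x)v,v\rangle\leq\Lambda|v|^2$ for all $x\in S^{n-1}$, $v\in\mathbb{R}^n$, for some constants $0<\lambda\le\Lambda$. Let $T$ be $h$-monotone, $x_0\in\mathbb{R}^n$, and suppose $T\in L^{p-1}(B_\epsilon(x_0))$ for some $\epsilon>0$ and there exist a matrix $A=A_{x_0}\in\mathbb{R}^{n\times n}$ and a vector $b=b_{x_0}\in\mathbb{R}^n$ such that $$\left(\fint_{B_R(x_0)}|Tx-Ax-b|^{p-1}dx\right)^{1/(p-1)}=o(R)\quad\text{as }R\to 0,$$ i.e. $T\in t^{1,p-1}(x_0)$. Then $T$ is differentiable in the ordinary sense at $x_0$.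
   Context: A multivalued map $T:\mathbb{R}^n\to\mathcal P(\mathbb{R}^n)$ is $h$-monotone if $h(x-\xi)+h(y-\zeta)\leq h(x-\zeta)+h(y-\xi)$ for all $x,y$ with $T(x),T(y)\neq\emptyset$ and all $\xi\in T(x)$, $\zeta\in T(y)$; such maps are single-valued a.e. and are regarded as a.e. defined functions $\mathbb{R}^n\to\mathbb{R}^n$. For $1\le q\le\infty$, real $k\geq -n/q$, $f\in L^q$ near $x_0$: $f\in t^{k,q}(x_0)$ means there is a polynomial $P_{x_0}$ of degree $\le k$ (of degree strictly less than $k$ for the class $T^{k,q}(x_0)$; $P_{x_0}\equiv0$ if $k\le0$) with $\left(\fint_{B_r(x_0)}|f-P_{x_0}|^q\right)^{1/q}=o(r^k)$ (respectively $O(r^k)$ for $T^{k,q}(x_0)$) as $r\to0$, with the essential sup over $B_r(x_0)$ when $q=\infty$; vector-valued maps belong to a class if each component does. *)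

theory Defs
  imports "HOL-Analysis.Analysis" "HOL-Library.Landau_Symbols"
begin

definition h_monotone :: "('a::real_vector \<Rightarrow> real) \<Rightarrow> ('a \<Rightarrow> 'a set) \<Rightarrow> bool" where
  "h_monotone h T \<longleftrightarrow>
     (\<forall>x y \<xi> \<zeta>. \<xi> \<in> T x \<longrightarrow> \<zeta> \<in> T y \<longrightarrow>
        h (x - \<xi>) + h (y - \<zeta>) \<le> h (x - \<zeta>) + h (y - \<xi>))"

text \<open>Ordinary differentiability at x0 of a multivalued map: there is an affine map
  x \<mapsto> A x + b such that every value \<xi> \<in> T x satisfies
  |\<xi> - A x - b| = o(|x - x0|) as x \<rightarrow> x0 (in particular T x0 \<subseteq> {A x0 + b}).\<close>
definition mv_differentiable_at ::
  "(real^'n \<Rightarrow> (real^'n) set) \<Rightarrow> real^'n \<Rightarrow> bool" where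
  "mv_differentiable_at T x0 \<longleftrightarrow>
     (\<exists>(A::real^'n^'n) b. \<forall>e>0. \<exists>\<delta>>0. \<forall>x \<xi>. dist x x0 < \<delta> \<longrightarrow> \<xi> \<in> T x \<longrightarrow>
        norm (\<xi> - (A *v x + b)) \<le> e * dist x x0)"

end

theory Submission
  imports Defs
begin

text \<open>
  Since the Hessian of \<open>h\<close> is positive semidefinite, \<open>h\<close> lies above its tangent planes, and
  \<open>h\<close>-monotonicity of \<open>T\<close> becomes the inequality
  \<open>0 \<le> (Dh (y - \<xi>) - Dh (x - \<zeta>)) \<bullet> (y - x)\<close> for \<open>\<xi> \<in> T x\<close>, \<open>\<zeta> \<in> T y\<close>.
  Let \<open>\<xi> \<in> T x\<close> deviate from the affine map by \<open>E = A x + b - \<xi> \<noteq> 0\<close>. The \<open>o(R)\<close> bound on the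
  \<open>L\<^sup>p\<^sup>-\<^sup>1\<close> means yields, inside every ball of radius comparable to \<open>R\<close> in \<open>B\<^sub>R(x\<^sub>0)\<close>, points \<open>y\<close>
  with \<open>T y = {\<zeta>}\<close> and \<open>|\<zeta> - A y - b| \<le> \<rho>\<close>, where \<open>\<rho>\<close> is a small multiple of \<open>R\<close>. Choose such a \<open>y\<close>
  near \<open>x - \<rho> E/|E|\<close>. Along the segment from \<open>P = y - (A x + b)\<close> to \<open>P + E = y - \<xi>\<close>,
  uniform ellipticity makes \<open>t \<mapsto> Dh (P + t E) \<bullet> (y - x)\<close> decrease by at least a multiple of
  \<open>\<rho> |E| max(|P|,|E|)\<^sup>p\<^sup>-\<^sup>2\<close>, whereas replacing \<open>x - \<zeta>\<close> by \<open>P\<close> costs at most a multiple of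
  \<open>\<rho>\<^sup>2 (|P| + \<rho>)\<^sup>p\<^sup>-\<^sup>2\<close>. Hence \<open>|E| = O(\<rho>)\<close>, which is \<open>|\<xi> - A x - b| = o(|x - x\<^sub>0|)\<close>.
\<close>

lemma norm_matrix_vector_mult_le:
  fixes M :: "real^'n^'m"
  shows "norm (M *v x) \<le> real CARD('m) * real CARD('n) * norm M * norm x"
proof -
  have "onorm ((*v) M) \<le> real CARD('m) * real CARD('n) * norm M"
    by (rule onorm_le_matrix_component)
      (rule order_trans[OF component_le_norm_cart Finite_Cartesian_Product.norm_nth_le])
  then show ?thesis
    using onorm[OF matrix_vector_mul_bounded_linear, of M x]
    by (meson mult_right_mono norm_ge_zero order_trans)
qed

lemma bounded_linear_matrix_vector_mult_left: "bounded_linear (\<lambda>M::real^'n^'m. M *v x)"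
proof (rule bounded_linear_intro[where K = "real CARD('m) * real CARD('n) * norm x"])
  show "(M + N) *v x = M *v x + N *v x" for M N :: "real^'n^'m"
    by (simp add: matrix_vector_mult_add_rdistrib)
  show "(r *\<^sub>R M) *v x = r *\<^sub>R (M *v x)" for r and M :: "real^'n^'m"
    by (simp add: scaleR_matrix_vector_assoc)
  show "norm (M *v x) \<le> norm M * (real CARD('m) * real CARD('n) * norm x)" for M :: "real^'n^'m"
    using norm_matrix_vector_mult_le[of M x] by (simp add: mult_ac)
qed

lemma isCont_le_of_le_punctured_ball:
  fixes g :: "'a::{metric_space,perfect_space} \<Rightarrow> real"
  assumes "isCont g a" "0 < r" "\<And>v. v \<noteq> a \<Longrightarrow> dist v a < r \<Longrightarrow> g v \<le> c"
  shows "g a \<le> c"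
proof (rule tendsto_upperbound)
  show "(g \<longlongrightarrow> g a) (at a)"
    using assms(1) by (simp add: isCont_def)
  show "\<forall>\<^sub>F v in at a. g v \<le> c"
    using assms(2,3) by (auto simp: eventually_at)
qed (rule trivial_limit_at)

lemma segment_quarter_away_from_0:
  fixes P E :: "'a::real_inner"
  obtains t0 where "0 \<le> t0" "t0 \<le> 3/4"
    "\<And>t. t0 \<le> t \<Longrightarrow> t \<le> t0 + 1/4 \<Longrightarrow> max (norm P) (norm E) / 8 \<le> norm (P + t *\<^sub>R E)"
proof -
  \<comment> \<open>\<open>P + \<tau> *\<^sub>R E\<close> is the point of the line closest to 0;
    the chosen quarter keeps \<open>t\<close> at distance \<open>1/4\<close> from \<open>\<tau>\<close>.\<close>
  define \<tau> where "\<tau> = - (P \<bullet> E) / (norm E)\<^sup>2"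
  define t0 :: real where "t0 = (if 1/2 \<le> \<tau> then 0 else 3/4)"
  show thesis
  proof (rule that[of t0])
    fix t assume t: "t0 \<le> t" "t \<le> t0 + 1/4"
    show "max (norm P) (norm E) / 8 \<le> norm (P + t *\<^sub>R E)"
    proof (cases "norm E \<le> norm P / 2")
      case True
      have "\<bar>t\<bar> \<le> 1"
        using t by (auto simp: t0_def split: if_splits)
      then have "norm (t *\<^sub>R E) \<le> norm E"
        by (simp add: mult_left_le_one_le)
      moreover have "norm P - norm (t *\<^sub>R E) \<le> norm (P + t *\<^sub>R E)"
        by (metis norm_diff_ineq)
      moreover have "max (norm P) (norm E) = norm P"
        using True norm_ge_zero[of E] by (intro max_absorb1) linarith
      ultimately show ?thesis
        using True by linarith
    next
      case False
      then have E: "0 < norm E" and max_le: "max (norm P) (norm E) / 8 \<le> norm E / 4"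
        by (auto simp: max_def)
      have "1/4 \<le> \<bar>t - \<tau>\<bar>"
        using t by (auto simp: t0_def split: if_splits)
      then have "norm E / 4 \<le> norm E * \<bar>t - \<tau>\<bar>"
        using E by (simp add: mult_left_mono)
      also have "norm E * \<bar>t - \<tau>\<bar> = \<bar>(P + t *\<^sub>R E) \<bullet> E\<bar> / norm E"
        using E by (simp add: \<tau>_def inner_add_left dot_square_norm abs_mult field_simps power2_eq_square)
      also have "\<dots> \<le> norm (P + t *\<^sub>R E)"
        using Cauchy_Schwarz_ineq2[of "P + t *\<^sub>R E" E] E by (simp add: divide_le_eq)
      finally show ?thesis
        using max_le by linarith
    qed
  qed (auto simp: t0_def)
qed

lemma DERIV_nonpos_decrease_le:
  fixes g g' :: "real \<Rightarrow> real"
  assumes deriv: "\<And>t. (g has_real_derivative g' t) (at t)"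
    and nonpos: "\<And>t. 0 \<le> t \<Longrightarrow> t \<le> 1 \<Longrightarrow> g' t \<le> 0"
    and sub: "0 \<le> t0" "0 \<le> l" "t0 + l \<le> 1"
    and steep: "\<And>t. t0 \<le> t \<Longrightarrow> t \<le> t0 + l \<Longrightarrow> g' t \<le> - c"
  shows "g 1 \<le> g 0 - c * l"
proof -
  have "g t0 \<le> g 0"
    by (rule DERIV_nonpos_imp_nonincreasing[OF sub(1)]) (use deriv nonpos sub in force)
  moreover have "g 1 \<le> g (t0 + l)"
    by (rule DERIV_nonpos_imp_nonincreasing[OF sub(3)]) (use deriv nonpos sub in force)
  moreover have "g (t0 + l) + c * (t0 + l) \<le> g t0 + c * t0"
  proof (rule DERIV_nonpos_imp_nonincreasing[where f = "\<lambda>t. g t + c * t"])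
    fix t assume "t0 \<le> t" "t \<le> t0 + l"
    then have "g' t + c \<le> 0"
      using steep by fastforce
    then show "\<exists>y. ((\<lambda>t. g t + c * t) has_real_derivative y) (at t) \<and> y \<le> 0"
      by (intro exI[of _ "g' t + c"]) (auto intro!: derivative_eq_intros deriv)
  qed (use sub in simp)
  ultimately show ?thesis
    by (simp add: algebra_simps)
qed

lemma h_monotone_gradient_inner_nonneg:
  fixes h :: "'a::real_inner \<Rightarrow> real"
  assumes mono: "h_monotone h T"
    and above_tangent: "\<And>P q. h P + Dh P \<bullet> (q - P) \<le> h q"
    and "\<xi> \<in> T x" "\<zeta> \<in> T y"
  shows "0 \<le> (Dh (y - \<xi>) - Dh (x - \<zeta>)) \<bullet> (y - x)"
proof -
  have "h (x - \<xi>) + h (y - \<zeta>) \<le> h (x - \<zeta>) + h (y - \<xi>)"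
    using mono assms(3,4) unfolding h_monotone_def by blast
  moreover have "h (y - \<xi>) + Dh (y - \<xi>) \<bullet> (x - y) \<le> h (x - \<xi>)"
    using above_tangent[of "y - \<xi>" "x - \<xi>"] by (simp add: algebra_simps)
  moreover have "h (x - \<zeta>) + Dh (x - \<zeta>) \<bullet> (y - x) \<le> h (y - \<zeta>)"
    using above_tangent[of "x - \<zeta>" "y - \<zeta>"] by (simp add: algebra_simps)
  ultimately show ?thesis
    by (simp add: algebra_simps)
qed

lemma mv_differentiable_atI:
  fixes T :: "real^'n \<Rightarrow> (real^'n) set"
  assumes "\<And>e. 0 < e \<Longrightarrow> \<forall>\<^sub>F R in at_right 0.
      \<forall>x \<xi>. 2 * dist x x0 \<le> R \<longrightarrow> \<xi> \<in> T x \<longrightarrow> norm (\<xi> - (A *v x + b)) \<le> e * R"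
  shows "mv_differentiable_at T x0"
  unfolding mv_differentiable_at_def
proof (intro exI[of _ A] exI[of _ b] allI impI)
  fix e :: real assume "0 < e"
  then obtain \<delta> where \<delta>: "0 < \<delta>" and small: "\<And>R x \<xi>. 0 < R \<Longrightarrow> R < \<delta> \<Longrightarrow> 2 * dist x x0 \<le> R \<Longrightarrow>
      \<xi> \<in> T x \<Longrightarrow> norm (\<xi> - (A *v x + b)) \<le> e / 2 * R"
    using assms[of "e / 2"] by (auto simp: eventually_at_right_field)
  show "\<exists>\<delta>>0. \<forall>x \<xi>. dist x x0 < \<delta> \<longrightarrow> \<xi> \<in> T x \<longrightarrow> norm (\<xi> - (A *v x + b)) \<le> e * dist x x0"
  proof (intro exI[of _ "\<delta> / 2"] conjI allI impI)
    fix x \<xi> assume x: "dist x x0 < \<delta> / 2" and \<xi>: "\<xi> \<in> T x"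
    have "norm (\<xi> - (A *v x + b)) / (e / 2) \<le> 2 * dist x x0"
    proof (rule dense_ge_bounded)
      show "2 * dist x x0 < \<delta>"
        using x by simp
      fix R assume "2 * dist x x0 < R" "R < \<delta>"
      then show "norm (\<xi> - (A *v x + b)) / (e / 2) \<le> R"
        using small[of R x \<xi>] \<xi> \<open>0 < e\<close> zero_le_dist[of x x0]
        by (simp add: divide_le_eq mult.commute)
    qed
    then show "norm (\<xi> - (A *v x + b)) \<le> e * dist x x0"
      using \<open>0 < e\<close> by (simp add: divide_le_eq mult.commute)
  qed (simp add: \<delta>)
qed

section \<open>Selecting points where a function with small means is small\<close>

lemma ex_point_le_of_set_integral_less:
  fixes G :: "'a::euclidean_space \<Rightarrow> real"
  assumes int: "set_integrable lebesgue S G" and nonneg: "\<And>x. 0 \<le> G x"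
    and B: "B \<in> lmeasurable" "B \<subseteq> S"
    and ae: "AE y in lebesgue. Q y"
    and less: "(LINT x:S|lebesgue. G x) < \<gamma> * measure lebesgue B"
  shows "\<exists>y\<in>B. Q y \<and> G y \<le> \<gamma>"
proof (rule ccontr)
  assume "\<not> ?thesis"
  then have "AE y in lebesgue. indicator B y * \<gamma> \<le> indicator S y * G y"
    using ae B(2) nonneg by (auto elim!: eventually_mono simp: indicator_def not_le less_imp_le)
  then have "(LINT y|lebesgue. indicator B y * \<gamma>) \<le> (LINT y|lebesgue. indicator S y * G y)"
    using int B(1) by (intro integral_mono_AE) (auto simp: set_integrable_def fmeasurable_def)
  then show False
    using less B(1) by (simp add: set_lebesgue_integral_def mult.commute)
qed

lemma measure_lebesgue_ball:
  fixes c :: "'a::euclidean_space"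
  assumes "0 \<le> r"
  shows "measure lebesgue (ball c r) = r ^ DIM('a) * measure lebesgue (ball (0::'a) 1)"
  using content_ball_conv_unit_ball[OF assms, of c] by (simp add: measure_def)

lemma powr_add_le_two_powr:
  fixes a b q :: real
  assumes "0 \<le> a" "0 \<le> b" "0 < q"
  shows "(a + b) powr q \<le> 2 powr q * (a powr q + b powr q)"
proof -
  have "(a + b) powr q \<le> (2 * max a b) powr q"
    using assms by (intro powr_mono2) auto
  also have "\<dots> = 2 powr q * max a b powr q"
    using assms by (simp add: powr_mult)
  also have "\<dots> \<le> 2 powr q * (a powr q + b powr q)"
    by (intro mult_left_mono) (auto simp: max_def)
  finally show ?thesis .
qed

lemma integrable_norm_diff_continuous_powr:
  fixes f g :: "'a::euclidean_space \<Rightarrow> 'b::euclidean_space"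
  assumes S: "S \<in> sets lebesgue" "bounded S"
    and g: "continuous_on (closure S) g"
    and f: "f \<in> borel_measurable (lebesgue_on S)"
    and int: "integrable (lebesgue_on S) (\<lambda>x. norm (f x) powr q)"
    and q: "0 < q"
  shows "integrable (lebesgue_on S) (\<lambda>x. norm (f x - g x) powr q)"
proof -
  have "bounded (g ` closure S)"
    using S(2) g by (intro compact_imp_bounded compact_continuous_image) auto
  then obtain B where B: "\<And>x. x \<in> S \<Longrightarrow> norm (g x) \<le> B"
    using closure_subset unfolding bounded_iff by blast
  interpret finite_measure "lebesgue_on S"
    using S by (intro finite_measure_lebesgue_on bounded_set_imp_lmeasurable)
  have [measurable]: "g \<in> borel_measurable (lebesgue_on S)"
    using continuous_on_subset[OF g closure_subset] S(1)
    by (rule continuous_imp_measurable_on_sets_lebesgue)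
  note [measurable] = f
  show ?thesis
  proof (rule Bochner_Integration.integrable_bound)
    show "integrable (lebesgue_on S) (\<lambda>x. 2 powr q * (norm (f x) powr q + B powr q))"
      using int by (intro integrable_mult_right integrable_add) auto
    show "AE x in lebesgue_on S. norm (norm (f x - g x) powr q) \<le> norm (2 powr q * (norm (f x) powr q + B powr q))"
    proof (rule AE_I2)
      fix x assume "x \<in> space (lebesgue_on S)"
      then have x: "norm (g x) \<le> B"
        using B by simp
      have "norm (f x - g x) powr q \<le> (norm (f x) + B) powr q"
        using q x norm_triangle_ineq4[of "f x" "g x"] by (intro powr_mono2) auto
      also have "\<dots> \<le> 2 powr q * (norm (f x) powr q + B powr q)"
        using q order_trans[OF norm_ge_zero x] by (intro powr_add_le_two_powr) auto
      finally show "norm (norm (f x - g x) powr q) \<le> norm (2 powr q * (norm (f x) powr q + B powr q))"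
        by simp
    qed
  qed measurable
qed

lemma eventually_less_powr_of_root_little_o:
  fixes m :: "real \<Rightarrow> real"
  assumes q: "0 < q" and \<kappa>: "0 < \<kappa>" and nonneg: "\<And>R. 0 \<le> m R"
    and small: "(\<lambda>R. m R powr (1 / q)) \<in> o[at_right 0](\<lambda>R. R)"
  shows "\<forall>\<^sub>F R in at_right 0. m R < \<kappa> * R powr q"
proof -
  define c where "c = (\<kappa> / 2) powr (1 / q)"
  have "0 < c"
    using \<kappa> by (simp add: c_def)
  have pointwise: "m R < \<kappa> * R powr q" if R: "0 < R" and le: "m R powr (1 / q) \<le> c * R" for R
  proof -
    have "m R = (m R powr (1 / q)) powr q"
      using q nonneg[of R] by (simp add: powr_powr)
    also have "\<dots> \<le> (c * R) powr q"
      using le q by (intro powr_mono2) auto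
    also have "\<dots> = \<kappa> / 2 * R powr q"
      using q \<kappa> R by (simp add: c_def powr_mult powr_powr)
    moreover have "0 < \<kappa> * R powr q"
      using \<kappa> R by simp
    ultimately show ?thesis
      by linarith
  qed
  show ?thesis
    using landau_o.smallD[OF small \<open>0 < c\<close>] eventually_at_right_less[of "0::real"]
    by eventually_elim (use pointwise in auto)
qed

lemma ex_small_value_in_subball:
  fixes F :: "'a::euclidean_space \<Rightarrow> 'b::real_normed_vector"
  assumes q: "0 < q" and \<theta>: "0 < \<theta>" and R: "0 < R"
    and int: "set_integrable lebesgue (ball x0 R) (\<lambda>x. norm (F x) powr q)"
    and ae: "AE x in lebesgue. Q x"
    and small: "(LINT x:ball x0 R|lebesgue. norm (F x) powr q)
      < (\<theta> * R) powr q * (\<theta> ^ DIM('a) * measure lebesgue (ball x0 R))"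
    and sub: "ball c r \<subseteq> ball x0 R" and r: "\<theta> * R \<le> r"
  shows "\<exists>y\<in>ball c r. Q y \<and> norm (F y) \<le> \<theta> * R"
proof -
  have "\<theta> ^ DIM('a) * measure lebesgue (ball x0 R) = (\<theta> * R) ^ DIM('a) * measure lebesgue (ball (0::'a) 1)"
    using measure_lebesgue_ball[of R x0] R by (simp add: power_mult_distrib)
  also have "\<dots> \<le> measure lebesgue (ball c r)"
    using r mult_pos_pos[OF \<theta> R] measure_lebesgue_ball[of r c] by (simp add: mult_right_mono power_mono)
  finally have "(\<theta> * R) powr q * (\<theta> ^ DIM('a) * measure lebesgue (ball x0 R))
      \<le> (\<theta> * R) powr q * measure lebesgue (ball c r)"
    by (simp add: mult_left_mono)
  with small have less: "(LINT x:ball x0 R|lebesgue. norm (F x) powr q) < (\<theta> * R) powr q * measure lebesgue (ball c r)"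
    by linarith
  obtain y where y: "y \<in> ball c r" "Q y" "norm (F y) powr q \<le> (\<theta> * R) powr q"
    using ex_point_le_of_set_integral_less[OF int _ lmeasurable_ball sub ae less] by auto
  have "norm (F y) \<le> \<theta> * R"
  proof (rule ccontr)
    assume "\<not> ?thesis"
    then have "(\<theta> * R) powr q < norm (F y) powr q"
      using \<theta> R q by (intro powr_less_mono2) auto
    with y(3) show False
      by simp
  qed
  with y show ?thesis
    by blast
qed

lemma eventually_small_value_in_subballs:
  fixes F :: "'a::euclidean_space \<Rightarrow> 'b::real_normed_vector"
  assumes q: "0 < q" and \<epsilon>: "0 < \<epsilon>"
    and int: "integrable (lebesgue_on (ball x0 \<epsilon>)) (\<lambda>x. norm (F x) powr q)"
    and ae: "AE x in lebesgue. Q x"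
    and small_mean: "(\<lambda>R. ((LINT x:ball x0 R|lebesgue. norm (F x) powr q)
        / measure lebesgue (ball x0 R)) powr (1 / q)) \<in> o[at_right 0](\<lambda>R. R)"
    and \<theta>: "0 < \<theta>"
  shows "\<forall>\<^sub>F R in at_right 0. \<forall>c r. ball c r \<subseteq> ball x0 R \<longrightarrow> \<theta> * R \<le> r \<longrightarrow>
      (\<exists>y\<in>ball c r. Q y \<and> norm (F y) \<le> \<theta> * R)"
proof -
  define I where "I R = (LINT x:ball x0 R|lebesgue. norm (F x) powr q)" for R
  have I_nonneg: "0 \<le> I R" for R
    unfolding I_def set_lebesgue_integral_def
    by (intro Bochner_Integration.integral_nonneg) (simp add: indicator_def)
  have "\<forall>\<^sub>F R in at_right 0. I R / measure lebesgue (ball x0 R) < \<theta> powr q * \<theta> ^ DIM('a) * R powr q"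
    using \<theta> I_nonneg small_mean unfolding I_def
    by (intro eventually_less_powr_of_root_little_o[OF q]) auto
  moreover have "\<forall>\<^sub>F R in at_right 0. 0 < R \<and> R < \<epsilon>"
    using \<epsilon> eventually_at_right_less[of "0::real"] by (auto simp: eventually_at_right_field)
  ultimately show ?thesis
  proof eventually_elim
    case (elim R)
    then have R: "0 < R" "R < \<epsilon>"
      by auto
    have "0 < measure lebesgue (ball x0 R)"
      using content_ball_pos[OF R(1), of x0] by simp
    then have "I R < (\<theta> * R) powr q * (\<theta> ^ DIM('a) * measure lebesgue (ball x0 R))"
      using elim \<theta> by (simp add: divide_less_eq powr_mult mult_ac)
    moreover have "set_integrable lebesgue (ball x0 R) (\<lambda>x. norm (F x) powr q)"
    proof (rule set_integrable_subset)
      show "set_integrable lebesgue (ball x0 \<epsilon>) (\<lambda>x. norm (F x) powr q)"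
        using int by (simp add: set_integrable_def integrable_restrict_space)
    qed (use R in auto)
    ultimately show ?case
      using ex_small_value_in_subball[OF q \<theta> R(1) _ ae] unfolding I_def by blast
  qed
qed

section \<open>Homogeneous uniformly elliptic functions\<close>

locale homogeneous_elliptic =
  fixes p lam :: real and h :: "real^'n \<Rightarrow> real"
    and Dh :: "real^'n \<Rightarrow> real^'n" and D2h :: "real^'n \<Rightarrow> real^'n^'n"
  assumes two_le_p: "2 \<le> p"
    and has_derivative_h: "\<And>x. (h has_derivative (\<lambda>v. Dh x \<bullet> v)) (at x)"
    and has_derivative_Dh: "\<And>x. (Dh has_derivative (\<lambda>v. D2h x *v v)) (at x)"
    and continuous_D2h: "continuous_on UNIV D2h"
    and homogeneous: "\<And>t x. 0 < t \<Longrightarrow> h (t *\<^sub>R x) = t powr p * h x"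
    and lam_pos: "0 < lam"
    and hessian_ge_sphere: "\<And>x v. norm x = 1 \<Longrightarrow> lam * (norm v)\<^sup>2 \<le> (D2h x *v v) \<bullet> v"
begin

lemma Dh_homogeneous:
  assumes t: "0 < t"
  shows "Dh (t *\<^sub>R x) = t powr (p - 1) *\<^sub>R Dh x"
proof -
  have "((\<lambda>x. h (t *\<^sub>R x)) has_derivative (\<lambda>v. Dh (t *\<^sub>R x) \<bullet> (t *\<^sub>R v))) (at x)"
    using has_derivative_compose[OF has_derivative_scaleR_right[OF has_derivative_ident] has_derivative_h]
    by (simp add: o_def)
  moreover have "((\<lambda>x. h (t *\<^sub>R x)) has_derivative (\<lambda>v. t powr p * (Dh x \<bullet> v))) (at x)"
    unfolding homogeneous[OF t] by (intro derivative_intros has_derivative_h)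
  ultimately have "(\<lambda>v. Dh (t *\<^sub>R x) \<bullet> (t *\<^sub>R v)) = (\<lambda>v. t powr p * (Dh x \<bullet> v))"
    by (rule has_derivative_unique)
  then have "Dh (t *\<^sub>R x) \<bullet> v = (t powr (p - 1) *\<^sub>R Dh x) \<bullet> v" for v
    using t by (auto simp: fun_eq_iff powr_diff field_simps dest: spec[of _ v])
  then show ?thesis
    using vector_eq_rdot by blast
qed

lemma D2h_homogeneous:
  assumes t: "0 < t"
  shows "D2h (t *\<^sub>R x) *v v = t powr (p - 2) *\<^sub>R (D2h x *v v)"
proof -
  have "((\<lambda>x. Dh (t *\<^sub>R x)) has_derivative (\<lambda>v. D2h (t *\<^sub>R x) *v (t *\<^sub>R v))) (at x)"
    using has_derivative_compose[OF has_derivative_scaleR_right[OF has_derivative_ident] has_derivative_Dh]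
    by (simp add: o_def)
  moreover have "((\<lambda>x. Dh (t *\<^sub>R x)) has_derivative (\<lambda>v. t powr (p - 1) *\<^sub>R (D2h x *v v))) (at x)"
    unfolding Dh_homogeneous[OF t] by (intro derivative_intros has_derivative_Dh)
  ultimately have "(\<lambda>v. D2h (t *\<^sub>R x) *v (t *\<^sub>R v)) = (\<lambda>v. t powr (p - 1) *\<^sub>R (D2h x *v v))"
    by (rule has_derivative_unique)
  then have "t *\<^sub>R (D2h (t *\<^sub>R x) *v v) = t *\<^sub>R (t powr (p - 2) *\<^sub>R (D2h x *v v))"
    using t by (auto simp: fun_eq_iff matrix_vector_mult_scaleR powr_diff power2_eq_square dest: spec[of _ v])
  then show ?thesis
    using t by (subst (asm) scaleR_cancel_left) simp
qed

lemma isCont_D2h_mult: "isCont (\<lambda>v. D2h v *v E) x"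
  using continuous_on_eq_continuous_at[of UNIV] continuous_D2h
    bounded_linear.isCont[OF bounded_linear_matrix_vector_mult_left] by blast

lemma D2h_mult_eq_sgn:
  assumes "v \<noteq> 0"
  shows "D2h v *v E = norm v powr (p - 2) *\<^sub>R (D2h (sgn v) *v E)"
  using D2h_homogeneous[of "norm v" "sgn v" E] assms by (simp add: sgn_div_norm)

lemma hessian_ge:
  assumes "v \<noteq> 0"
  shows "lam * norm v powr (p - 2) * (norm E)\<^sup>2 \<le> (D2h v *v E) \<bullet> E"
  using hessian_ge_sphere[of "sgn v" E] assms
  by (simp add: D2h_mult_eq_sgn norm_sgn mult_left_mono mult.assoc)

lemma hessian_nonneg: "0 \<le> (D2h v *v E) \<bullet> E"
proof -
  have off_0: "0 \<le> (D2h w *v E) \<bullet> E" if "w \<noteq> 0" for w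
    by (rule order_trans[OF _ hessian_ge[OF that]]) (use lam_pos in simp)
  \<comment> \<open>Homogeneity says nothing at 0 (for \<open>p = 2\<close> the Hessian need not vanish there).\<close>
  have "- ((D2h 0 *v E) \<bullet> E) \<le> 0"
  proof (rule isCont_le_of_le_punctured_ball[where g = "\<lambda>v. - ((D2h v *v E) \<bullet> E)" and r = 1])
    show "isCont (\<lambda>v. - ((D2h v *v E) \<bullet> E)) 0"
      by (intro continuous_intros isCont_D2h_mult)
  qed (use off_0 in auto)
  then show ?thesis
    using off_0 by (cases "v = 0") auto
qed

lemma hessian_bounded:
  obtains C where "0 < C"
    "\<And>v E R. norm v \<le> R \<Longrightarrow> 0 < R \<Longrightarrow> norm (D2h v *v E) \<le> C * R powr (p - 2) * norm E"
proof -
  have "bounded (D2h ` sphere 0 1)"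
    by (intro compact_imp_bounded compact_continuous_image continuous_on_subset[OF continuous_D2h]) auto
  then obtain B where B: "0 < B" "\<And>x. norm x = 1 \<Longrightarrow> norm (D2h x) \<le> B"
    by (auto simp: bounded_pos)
  define C where "C = real CARD('n) * real CARD('n) * B"
  have "0 < C"
    using B by (simp add: C_def)
  have off_0: "norm (D2h v *v E) \<le> C * R powr (p - 2) * norm E" if "v \<noteq> 0" "norm v \<le> R" for v E R
  proof -
    have "norm (D2h (sgn v) *v E) \<le> real CARD('n) * real CARD('n) * norm (D2h (sgn v)) * norm E"
      by (rule norm_matrix_vector_mult_le)
    also have "\<dots> \<le> C * norm E"
      unfolding C_def using B(2)[of "sgn v"] that(1) by (simp add: norm_sgn mult_left_mono mult_right_mono)
    finally have "norm (D2h (sgn v) *v E) \<le> C * norm E" .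
    moreover have "norm v powr (p - 2) \<le> R powr (p - 2)"
      using that two_le_p by (intro powr_mono2) auto
    ultimately have "norm v powr (p - 2) * norm (D2h (sgn v) *v E) \<le> R powr (p - 2) * (C * norm E)"
      by (intro mult_mono) auto
    then show ?thesis
      using that(1) by (simp add: D2h_mult_eq_sgn mult_ac)
  qed
  show thesis
  proof (rule that[OF \<open>0 < C\<close>])
    fix v E :: "real^'n" and R :: real assume v: "norm v \<le> R" and R: "0 < R"
    have "norm (D2h 0 *v E) \<le> C * R powr (p - 2) * norm E"
    proof (rule isCont_le_of_le_punctured_ball[where g = "\<lambda>v. norm (D2h v *v E)" and r = R])
      show "isCont (\<lambda>v. norm (D2h v *v E)) 0"
        by (intro continuous_intros isCont_D2h_mult)
    qed (use off_0 R in auto)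
    then show "norm (D2h v *v E) \<le> C * R powr (p - 2) * norm E"
      using off_0 v by (cases "v = 0") auto
  qed
qed

lemma has_real_derivative_h_line:
  "((\<lambda>t. h (P + t *\<^sub>R E)) has_real_derivative Dh (P + t *\<^sub>R E) \<bullet> E) (at t)"
proof -
  have "((\<lambda>t. P + t *\<^sub>R E) has_derivative (\<lambda>s. s *\<^sub>R E)) (at t)"
    by (intro derivative_eq_intros) auto
  from has_derivative_compose[OF this has_derivative_h]
  show ?thesis
    unfolding has_field_derivative_def by (rule has_derivative_eq_rhs) (auto simp: fun_eq_iff)
qed

lemma has_real_derivative_Dh_line:
  "((\<lambda>t. Dh (P + t *\<^sub>R E) \<bullet> z) has_real_derivative (D2h (P + t *\<^sub>R E) *v E) \<bullet> z) (at t)"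
proof -
  have "((\<lambda>t. P + t *\<^sub>R E) has_derivative (\<lambda>s. s *\<^sub>R E)) (at t)"
    by (intro derivative_eq_intros) auto
  from bounded_linear.has_derivative[OF bounded_linear_inner_left[of z]
      has_derivative_compose[OF this has_derivative_Dh]]
  show ?thesis
    unfolding has_field_derivative_def
    by (rule has_derivative_eq_rhs) (auto simp: fun_eq_iff matrix_vector_mult_scaleR)
qed

lemma above_tangent: "h P + Dh P \<bullet> (q - P) \<le> h q"
proof -
  define E where "E = q - P"
  have slope_mono: "Dh P \<bullet> E \<le> Dh (P + t *\<^sub>R E) \<bullet> E" if "0 \<le> t" for t
    using DERIV_nonneg_imp_nondecreasing[OF that, of "\<lambda>t. Dh (P + t *\<^sub>R E) \<bullet> E"]
      has_real_derivative_Dh_line hessian_nonneg by fastforce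
  have "h (P + 0 *\<^sub>R E) - 0 * (Dh P \<bullet> E) \<le> h (P + 1 *\<^sub>R E) - 1 * (Dh P \<bullet> E)"
  proof (rule DERIV_nonneg_imp_nondecreasing[of 0 1 "\<lambda>t. h (P + t *\<^sub>R E) - t * (Dh P \<bullet> E)"])
    fix t :: real assume "0 \<le> t" "t \<le> 1"
    then show "\<exists>y. ((\<lambda>t. h (P + t *\<^sub>R E) - t * (Dh P \<bullet> E)) has_real_derivative y) (at t) \<and> 0 \<le> y"
      using slope_mono[of t]
      by (intro exI conjI) (rule derivative_eq_intros has_real_derivative_h_line | simp)+
  qed simp
  then show ?thesis
    by (simp add: E_def)
qed

end

locale homogeneous_elliptic_bounded = homogeneous_elliptic p lam h Dh D2h
  for p lam :: real and h :: "real^'n \<Rightarrow> real"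
    and Dh :: "real^'n \<Rightarrow> real^'n" and D2h :: "real^'n \<Rightarrow> real^'n^'n" +
  fixes C :: real
  assumes C_pos: "0 < C"
    and norm_hessian_le: "\<And>v E R. norm v \<le> R \<Longrightarrow> 0 < R \<Longrightarrow> norm (D2h v *v E) \<le> C * R powr (p - 2) * norm E"
begin

lemma Dh_lipschitz:
  assumes "norm a \<le> R" "norm b \<le> R" "0 < R"
  shows "norm (Dh a - Dh b) \<le> C * R powr (p - 2) * norm (a - b)"
proof (rule differentiable_bound[of "cball 0 R" Dh "\<lambda>x v. D2h x *v v"])
  show "\<And>x. (Dh has_derivative (*v) (D2h x)) (at x within cball 0 R)"
    using has_derivative_Dh by (rule has_derivative_at_withinI)
  show "\<And>x. x \<in> cball 0 R \<Longrightarrow> onorm ((*v) (D2h x)) \<le> C * R powr (p - 2)"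
    using assms(3) by (intro onorm_le norm_hessian_le) auto
qed (use assms in auto)

lemma nonneg_of_C_norm_le:
  assumes "C * norm w \<le> lam / 2 * \<rho>"
  shows "0 \<le> \<rho>"
proof -
  have "0 \<le> C * norm w"
    using C_pos by simp
  then have "0 \<le> lam / 2 * \<rho>"
    using assms by linarith
  then show ?thesis
    using lam_pos by (simp add: zero_le_mult_iff)
qed

lemma hessian_inner_descent_le:
  assumes w: "C * norm w \<le> lam / 2 * \<rho>" and v: "v \<noteq> 0"
  shows "(D2h v *v E) \<bullet> (w - \<rho> *\<^sub>R sgn E) \<le> - (lam / 2 * \<rho> * norm E * norm v powr (p - 2))"
proof (cases "E = 0")
  case False
  define X where "X = lam / 2 * \<rho> * norm E * norm v powr (p - 2)"
  have "(D2h v *v E) \<bullet> w \<le> norm (D2h v *v E) * norm w"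
    by (rule norm_cauchy_schwarz)
  also have "\<dots> \<le> C * norm v powr (p - 2) * norm E * norm w"
    using norm_hessian_le[of v "norm v" E] v by (intro mult_right_mono) auto
  also have "\<dots> = norm v powr (p - 2) * norm E * (C * norm w)"
    by (simp add: mult_ac)
  also have "\<dots> \<le> norm v powr (p - 2) * norm E * (lam / 2 * \<rho>)"
    using w by (intro mult_left_mono) auto
  finally have "(D2h v *v E) \<bullet> w \<le> X"
    by (simp add: X_def mult_ac)
  moreover have "2 * X \<le> (D2h v *v E) \<bullet> (\<rho> *\<^sub>R sgn E)"
  proof -
    have "\<rho> / norm E * (lam * norm v powr (p - 2) * (norm E)\<^sup>2) \<le> \<rho> / norm E * ((D2h v *v E) \<bullet> E)"
      using hessian_ge[OF v, of E] nonneg_of_C_norm_le[OF w] by (intro mult_left_mono) auto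
    then show ?thesis
      using False by (simp add: X_def sgn_div_norm power2_eq_square field_simps)
  qed
  ultimately show ?thesis
    unfolding inner_diff_right X_def[symmetric] by linarith
qed simp

lemma hessian_inner_descent_nonpos:
  assumes w: "C * norm w \<le> lam / 2 * \<rho>"
  shows "(D2h v *v E) \<bullet> (w - \<rho> *\<^sub>R sgn E) \<le> 0"
proof -
  have off_0: "(D2h u *v E) \<bullet> (w - \<rho> *\<^sub>R sgn E) \<le> 0" if "u \<noteq> 0" for u
  proof -
    have "0 \<le> lam / 2 * \<rho> * norm E * norm u powr (p - 2)"
      using nonneg_of_C_norm_le[OF w] lam_pos by simp
    then show ?thesis
      using hessian_inner_descent_le[OF w that, of E] by linarith
  qed
  have "(D2h 0 *v E) \<bullet> (w - \<rho> *\<^sub>R sgn E) \<le> 0"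
  proof (rule isCont_le_of_le_punctured_ball[where g = "\<lambda>v. (D2h v *v E) \<bullet> (w - \<rho> *\<^sub>R sgn E)" and r = 1])
    show "isCont (\<lambda>v. (D2h v *v E) \<bullet> (w - \<rho> *\<^sub>R sgn E)) 0"
      by (intro continuous_intros isCont_D2h_mult)
  qed (use off_0 in auto)
  then show ?thesis
    using off_0 by (cases "v = 0") auto
qed

lemma Dh_inner_decrease:
  assumes w: "C * norm w \<le> lam / 2 * \<rho>"
  shows "Dh (P + E) \<bullet> (w - \<rho> *\<^sub>R sgn E)
    \<le> Dh P \<bullet> (w - \<rho> *\<^sub>R sgn E) - lam / 8 * \<rho> * norm E * (max (norm P) (norm E) / 8) powr (p - 2)"
proof -
  define z where "z = w - \<rho> *\<^sub>R sgn E"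
  define W where "W = max (norm P) (norm E)"
  define c where "c = lam / 2 * \<rho> * norm E * (W / 8) powr (p - 2)"
  obtain t0 where t0: "0 \<le> t0" "t0 \<le> 3/4"
    and far: "\<And>t. t0 \<le> t \<Longrightarrow> t \<le> t0 + 1/4 \<Longrightarrow> W / 8 \<le> norm (P + t *\<^sub>R E)"
    using segment_quarter_away_from_0[of P E] unfolding W_def by blast
  have nonpos: "(D2h (P + t *\<^sub>R E) *v E) \<bullet> z \<le> 0" for t
    unfolding z_def by (rule hessian_inner_descent_nonpos[OF w])
  have "Dh (P + 1 *\<^sub>R E) \<bullet> z \<le> Dh (P + 0 *\<^sub>R E) \<bullet> z - c * (1/4)"
  proof (rule DERIV_nonpos_decrease_le[OF has_real_derivative_Dh_line nonpos t0(1)])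
    fix t assume t: "t0 \<le> t" "t \<le> t0 + 1/4"
    show "(D2h (P + t *\<^sub>R E) *v E) \<bullet> z \<le> - c"
    proof (cases "E = 0")
      case False
      then have "0 < W / 8"
        by (simp add: W_def less_max_iff_disj)
      then have "P + t *\<^sub>R E \<noteq> 0" and "(W / 8) powr (p - 2) \<le> norm (P + t *\<^sub>R E) powr (p - 2)"
        using far[OF t] two_le_p by (auto intro: powr_mono2)
      moreover have "0 \<le> lam / 2 * \<rho> * norm E"
        using nonneg_of_C_norm_le[OF w] lam_pos by simp
      ultimately have "c \<le> lam / 2 * \<rho> * norm E * norm (P + t *\<^sub>R E) powr (p - 2)"
        unfolding c_def by (intro mult_left_mono)
      then show ?thesis
        using hessian_inner_descent_le[OF w \<open>P + t *\<^sub>R E \<noteq> 0\<close>, of E] unfolding z_def by linarith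
    qed (use nonpos in \<open>simp add: c_def\<close>)
  qed (use t0 in auto)
  moreover have "c * (1/4) = lam / 8 * \<rho> * norm E * (W / 8) powr (p - 2)"
    by (simp add: c_def)
  ultimately show ?thesis
    unfolding z_def[symmetric] W_def[symmetric] by (simp only: scaleR_one scaleR_zero_left add_0_right)
qed

lemma Dh_decrease_le_error:
  assumes \<rho>: "0 < \<rho>" and w: "C * norm w \<le> lam / 2 * \<rho>" "norm w \<le> \<rho>"
    and mono: "0 \<le> (Dh (P + E) - Dh q) \<bullet> (w - \<rho> *\<^sub>R sgn E)"
    and close: "norm (P - q) \<le> M * \<rho>" and far: "M * \<rho> < norm E"
  defines "W \<equiv> max (norm P) (norm E)"
  shows "lam / 8 * \<rho> * norm E * (W / 8) powr (p - 2) \<le> C * (2 * W) powr (p - 2) * (M * \<rho>) * (2 * \<rho>)"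
proof -
  define z where "z = w - \<rho> *\<^sub>R sgn E"
  have "0 \<le> M * \<rho>"
    using order_trans[OF norm_ge_zero close] .
  then have W: "0 < W" "norm P \<le> W" "M * \<rho> < W"
    using far by (auto simp: W_def less_max_iff_disj)
  have "norm z \<le> norm w + norm (\<rho> *\<^sub>R sgn E)"
    unfolding z_def by (rule norm_triangle_ineq4)
  then have z: "norm z \<le> 2 * \<rho>"
    using w(2) \<rho> by (simp add: norm_sgn split: if_splits)
  have "norm q \<le> norm P + norm (P - q)"
    using norm_triangle_ineq4[of P "P - q"] by simp
  then have "norm (Dh P - Dh q) \<le> C * (2 * W) powr (p - 2) * norm (P - q)"
    using close W by (intro Dh_lipschitz) auto
  also have "\<dots> \<le> C * (2 * W) powr (p - 2) * (M * \<rho>)"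
    using close C_pos by (intro mult_left_mono) auto
  finally have lip: "norm (Dh P - Dh q) \<le> C * (2 * W) powr (p - 2) * (M * \<rho>)" .
  then have "norm (Dh P - Dh q) * norm z \<le> C * (2 * W) powr (p - 2) * (M * \<rho>) * (2 * \<rho>)"
    using z order_trans[OF norm_ge_zero lip] by (intro mult_mono) auto
  then have "(Dh P - Dh q) \<bullet> z \<le> C * (2 * W) powr (p - 2) * (M * \<rho>) * (2 * \<rho>)"
    using norm_cauchy_schwarz[of "Dh P - Dh q" z] by linarith
  moreover have "Dh (P + E) \<bullet> z \<le> Dh P \<bullet> z - lam / 8 * \<rho> * norm E * (W / 8) powr (p - 2)"
    unfolding z_def W_def by (rule Dh_inner_decrease[OF w(1)])
  ultimately show ?thesis
    using mono unfolding z_def[symmetric] inner_diff_left by linarith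
qed

lemma norm_le_of_gradient_inner_nonneg:
  assumes \<rho>: "0 < \<rho>" and w: "C * norm w \<le> lam / 2 * \<rho>" "norm w \<le> \<rho>"
    and mono: "0 \<le> (Dh (P + E) - Dh q) \<bullet> (w - \<rho> *\<^sub>R sgn E)"
    and close: "norm (P - q) \<le> M * \<rho>"
  shows "norm E \<le> max M (16 * C * M * 16 powr (p - 2) / lam) * \<rho>"
proof (cases "norm E \<le> M * \<rho>")
  case True
  have "M * \<rho> \<le> max M (16 * C * M * 16 powr (p - 2) / lam) * \<rho>"
    using \<rho> by (intro mult_right_mono) auto
  with True show ?thesis
    by linarith
next
  case False
  define W where "W = max (norm P) (norm E)"
  have "0 < W"
    using False \<rho> order_trans[OF norm_ge_zero close] by (auto simp: W_def less_max_iff_disj)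
  have "lam / 8 * \<rho> * norm E * (W / 8) powr (p - 2) \<le> C * (2 * W) powr (p - 2) * (M * \<rho>) * (2 * \<rho>)"
    unfolding W_def using False by (intro Dh_decrease_le_error[OF \<rho> w mono close]) simp
  then have "(lam * norm E) * (\<rho> * W powr (p - 2))
      \<le> (16 * C * M * (2 powr (p - 2) * 8 powr (p - 2)) * \<rho>) * (\<rho> * W powr (p - 2))"
    using \<open>0 < W\<close> by (simp add: powr_divide powr_mult field_simps)
  then have "lam * norm E \<le> 16 * C * M * 16 powr (p - 2) * \<rho>"
    using \<rho> \<open>0 < W\<close> by (simp add: mult_le_cancel_right_pos flip: powr_mult)
  then have "norm E \<le> 16 * C * M * 16 powr (p - 2) / lam * \<rho>"
    using lam_pos by (simp add: field_simps)
  also have "\<dots> \<le> max M (16 * C * M * 16 powr (p - 2) / lam) * \<rho>"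
    using \<rho> by (intro mult_right_mono) auto
  finally show ?thesis .
qed

lemma defect_le_at_approximating_point:
  fixes A :: "real^'n^'n"
  assumes mono: "h_monotone h T"
    and A: "0 \<le> a" "\<And>z. norm (A *v z) \<le> a * norm z"
    and \<kappa>: "\<kappa> \<le> 1" "C * \<kappa> \<le> lam / 2"
    and \<rho>: "0 < \<rho>"
    and \<xi>: "\<xi> \<in> T x"
    and y: "dist y (x + \<rho> *\<^sub>R sgn (\<xi> - (A *v x + b))) < \<kappa> * \<rho>"
    and \<zeta>: "\<zeta> \<in> T y" "norm (\<zeta> - (A *v y + b)) \<le> \<rho>"
  shows "norm (\<xi> - (A *v x + b)) \<le> max (3 + 2 * a) (16 * C * (3 + 2 * a) * 16 powr (p - 2) / lam) * \<rho>"
proof -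
  define E where "E = A *v x + b - \<xi>"
  define w where "w = y - x + \<rho> *\<^sub>R sgn E"
  have "sgn (\<xi> - (A *v x + b)) = - sgn E"
    unfolding E_def by (metis minus_diff_eq sgn_minus)
  then have "norm w < \<kappa> * \<rho>"
    using y by (simp add: w_def dist_norm algebra_simps)
  moreover have "\<kappa> * \<rho> \<le> \<rho>" "C * (\<kappa> * \<rho>) \<le> lam / 2 * \<rho>"
    using \<kappa> \<rho> by (simp_all add: mult_right_mono mult.assoc[symmetric])
  moreover have "C * norm w \<le> C * (\<kappa> * \<rho>)"
    using \<open>norm w < \<kappa> * \<rho>\<close> C_pos by simp
  ultimately have w: "C * norm w \<le> lam / 2 * \<rho>" "norm w \<le> \<rho>"
    by linarith+
  have yx: "y - x = w - \<rho> *\<^sub>R sgn E"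
    by (simp add: w_def)
  have yx_le: "norm (y - x) \<le> 2 * \<rho>"
    using norm_triangle_ineq4[of w "\<rho> *\<^sub>R sgn E"] w(2) \<rho> unfolding yx
    by (simp add: norm_sgn split: if_splits)
  have "0 \<le> (Dh (y - \<xi>) - Dh (x - \<zeta>)) \<bullet> (y - x)"
    by (rule h_monotone_gradient_inner_nonneg[OF mono above_tangent \<xi> \<zeta>(1)])
  then have mono': "0 \<le> (Dh ((y - (A *v x + b)) + E) - Dh (x - \<zeta>)) \<bullet> (w - \<rho> *\<^sub>R sgn E)"
    unfolding yx[symmetric] by (simp add: E_def)
  have "norm (A *v (y - x)) \<le> a * (2 * \<rho>)"
    using A(2)[of "y - x"] mult_left_mono[OF yx_le A(1)] by linarith
  moreover have "(y - (A *v x + b)) - (x - \<zeta>) = (\<zeta> - (A *v y + b)) + (y - x) + A *v (y - x)"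
    by (simp add: algebra_simps)
  ultimately have "norm ((y - (A *v x + b)) - (x - \<zeta>)) \<le> \<rho> + 2 * \<rho> + a * (2 * \<rho>)"
    using \<zeta>(2) yx_le by (metis norm_triangle_le add_mono)
  then have close: "norm ((y - (A *v x + b)) - (x - \<zeta>)) \<le> (3 + 2 * a) * \<rho>"
    by (simp add: algebra_simps)
  have "norm E = norm (\<xi> - (A *v x + b))"
    by (simp add: E_def norm_minus_commute)
  then show ?thesis
    using norm_le_of_gradient_inner_nonneg[OF \<rho> w mono' close] by simp
qed

lemma defect_le_at_scale:
  fixes A :: "real^'n^'n"
  assumes mono: "h_monotone h T"
    and A: "0 \<le> a" "\<And>z. norm (A *v z) \<le> a * norm z"
    and \<kappa>: "\<kappa> \<le> 1" "C * \<kappa> \<le> lam / 2"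
    and \<eta>: "0 < \<eta>" "\<eta> \<le> 1/4" and R: "0 < R"
    and approx: "\<forall>c r. ball c r \<subseteq> ball x0 R \<longrightarrow> \<kappa> * \<eta> * R \<le> r \<longrightarrow>
        (\<exists>y\<in>ball c r. \<exists>\<zeta>\<in>T y. norm (\<zeta> - (A *v y + b)) \<le> \<kappa> * \<eta> * R)"
    and x: "2 * dist x x0 \<le> R" and \<xi>: "\<xi> \<in> T x"
  shows "norm (\<xi> - (A *v x + b))
    \<le> max (3 + 2 * a) (16 * C * (3 + 2 * a) * 16 powr (p - 2) / lam) * (\<eta> * R)"
proof -
  define \<rho> where "\<rho> = \<eta> * R"
  define c where "c = x + \<rho> *\<^sub>R sgn (\<xi> - (A *v x + b))"
  have \<rho>: "0 < \<rho>" "\<kappa> * \<rho> \<le> \<rho>" "2 * \<rho> \<le> R / 2"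
    using R \<eta> \<kappa> by (auto simp: \<rho>_def mult_right_mono)
  have "dist c x \<le> \<rho>"
    using \<rho>(1) by (simp add: c_def dist_norm norm_sgn)
  have "ball c (\<kappa> * \<rho>) \<subseteq> ball x0 R"
  proof
    fix y assume "y \<in> ball c (\<kappa> * \<rho>)"
    then have "dist c y < \<rho>"
      using \<rho>(2) unfolding mem_ball by linarith
    moreover have "dist x0 y \<le> dist x0 x + dist x c + dist c y"
      using dist_triangle[of x0 y c] dist_triangle[of x0 c x] by linarith
    ultimately show "y \<in> ball x0 R"
      using x \<rho>(3) \<open>dist c x \<le> \<rho>\<close> by (simp add: dist_commute)
  qed
  then have "\<exists>y\<in>ball c (\<kappa> * \<rho>). \<exists>\<zeta>\<in>T y. norm (\<zeta> - (A *v y + b)) \<le> \<kappa> * \<rho>"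
    using approx by (simp add: \<rho>_def mult.assoc)
  then obtain y \<zeta> where y: "y \<in> ball c (\<kappa> * \<rho>)" and \<zeta>: "\<zeta> \<in> T y" "norm (\<zeta> - (A *v y + b)) \<le> \<kappa> * \<rho>"
    by blast
  show ?thesis
    unfolding \<rho>_def[symmetric]
  proof (rule defect_le_at_approximating_point[OF mono A \<kappa> \<rho>(1) \<xi> _ \<zeta>(1)])
    show "dist y (x + \<rho> *\<^sub>R sgn (\<xi> - (A *v x + b))) < \<kappa> * \<rho>"
      using y by (simp add: c_def dist_commute)
  qed (use \<zeta>(2) \<rho>(2) in linarith)
qed

end

lemma (in homogeneous_elliptic) mv_differentiable_at_of_approximating_points:
  fixes T :: "real^'n \<Rightarrow> (real^'n) set" and A :: "real^'n^'n"
  assumes mono: "h_monotone h T"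
    and approx: "\<And>\<theta>. 0 < \<theta> \<Longrightarrow> \<forall>\<^sub>F R in at_right 0. \<forall>c r. ball c r \<subseteq> ball x0 R \<longrightarrow> \<theta> * R \<le> r \<longrightarrow>
        (\<exists>y\<in>ball c r. \<exists>\<zeta>\<in>T y. norm (\<zeta> - (A *v y + b)) \<le> \<theta> * R)"
  shows "mv_differentiable_at T x0"
proof -
  obtain C where C: "0 < C"
    "\<And>v E R. norm v \<le> R \<Longrightarrow> 0 < R \<Longrightarrow> norm (D2h v *v E) \<le> C * R powr (p - 2) * norm E"
    using hessian_bounded by blast
  interpret homogeneous_elliptic_bounded p lam h Dh D2h C
    by (rule homogeneous_elliptic_bounded.intro[OF homogeneous_elliptic_axioms]) (unfold_locales; fact C)
  define a where "a = real CARD('n) * real CARD('n) * norm A"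
  have a: "0 \<le> a" "\<And>z. norm (A *v z) \<le> a * norm z"
    unfolding a_def by (simp_all add: norm_matrix_vector_mult_le)
  define \<kappa> where "\<kappa> = min 1 (lam / (2 * C))"
  have \<kappa>: "0 < \<kappa>" "\<kappa> \<le> 1" "C * \<kappa> \<le> lam / 2"
    using C(1) lam_pos by (auto simp: \<kappa>_def min_def field_simps)
  define K where "K = max (3 + 2 * a) (16 * C * (3 + 2 * a) * 16 powr (p - 2) / lam)"
  have "0 < K"
    using a(1) by (simp add: K_def less_max_iff_disj)
  show ?thesis
  proof (rule mv_differentiable_atI)
    fix e :: real assume "0 < e"
    define \<eta> where "\<eta> = min (1/4) (e / K)"
    have \<eta>: "0 < \<eta>" "\<eta> \<le> 1/4" "K * \<eta> \<le> e"
      using \<open>0 < e\<close> \<open>0 < K\<close> by (auto simp: \<eta>_def min_def field_simps)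
    show "\<forall>\<^sub>F R in at_right 0. \<forall>x \<xi>. 2 * dist x x0 \<le> R \<longrightarrow> \<xi> \<in> T x \<longrightarrow>
        norm (\<xi> - (A *v x + b)) \<le> e * R"
      using approx[OF mult_pos_pos[OF \<kappa>(1) \<eta>(1)]] eventually_at_right_less[of "0::real"]
    proof eventually_elim
      case (elim R)
      have "K * (\<eta> * R) \<le> e * R"
        using \<eta>(3) elim(2) by (simp add: mult.assoc[symmetric] mult_right_mono)
      then show ?case
        using defect_le_at_scale[OF mono a \<kappa>(2,3) \<eta>(1,2) elim(2,1)] unfolding K_def[symmetric]
        by (blast intro: order_trans)
    qed
  qed
qed

theorem corollary4p2:
  fixes p lam Lam \<epsilon> :: real
    and h :: "real^'n \<Rightarrow> real"
    and Dh :: "real^'n \<Rightarrow> real^'n"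
    and D2h :: "real^'n \<Rightarrow> real^'n^'n"
    and T :: "real^'n \<Rightarrow> (real^'n) set"
    and f :: "real^'n \<Rightarrow> real^'n"
    and x0 b :: "real^'n"
    and A :: "real^'n^'n"
  assumes p: "p \<ge> 2"
    and h_grad: "\<And>x. (h has_derivative (\<lambda>v. Dh x \<bullet> v)) (at x)"
    and h_hess: "\<And>x. (Dh has_derivative (\<lambda>v. D2h x *v v)) (at x)"
    and h_C2: "continuous_on UNIV D2h"
    and h_nonneg: "\<And>x. h x \<ge> 0"
    and h_hom: "\<And>t x. t > 0 \<Longrightarrow> h (t *\<^sub>R x) = t powr p * h x"
    and ellipt: "0 < lam" "lam \<le> Lam"
    and hess_bounds: "\<And>x v. norm x = 1 \<Longrightarrow>
        lam * (norm v)\<^sup>2 \<le> (D2h x *v v) \<bullet> v \<and> (D2h x *v v) \<bullet> v \<le> Lam * (norm v)\<^sup>2"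
    and T_mono: "h_monotone h T"
    and f_ae: "AE x in lebesgue. T x = {f x}"
    and eps: "\<epsilon> > 0"
    and f_meas: "f \<in> borel_measurable (lebesgue_on (ball x0 \<epsilon>))"
    and f_Lp: "integrable (lebesgue_on (ball x0 \<epsilon>)) (\<lambda>x. norm (f x) powr (p - 1))"
    and t1: "(\<lambda>R. ((LINT x:ball x0 R|lebesgue. norm (f x - A *v x - b) powr (p - 1))
                    / measure lebesgue (ball x0 R)) powr (1 / (p - 1)))
             \<in> o[at_right 0](\<lambda>R. R)"
  shows "mv_differentiable_at T x0"
proof -
  interpret homogeneous_elliptic p lam h Dh D2h
    using p h_grad h_hess h_C2 h_hom ellipt(1) hess_bounds by unfold_locales auto
  have "integrable (lebesgue_on (ball x0 \<epsilon>)) (\<lambda>x. norm (f x - (A *v x + b)) powr (p - 1))"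
    using f_meas f_Lp p by (intro integrable_norm_diff_continuous_powr continuous_intros) auto
  then have int: "integrable (lebesgue_on (ball x0 \<epsilon>)) (\<lambda>x. norm (f x - A *v x - b) powr (p - 1))"
    by (simp add: diff_diff_eq)
  show ?thesis
  proof (rule mv_differentiable_at_of_approximating_points[OF T_mono])
    fix \<theta> :: real assume "0 < \<theta>"
    from eventually_small_value_in_subballs[OF _ eps int f_ae t1 this] p
    show "\<forall>\<^sub>F R in at_right 0. \<forall>c r. ball c r \<subseteq> ball x0 R \<longrightarrow> \<theta> * R \<le> r \<longrightarrow>
        (\<exists>y\<in>ball c r. \<exists>\<zeta>\<in>T y. norm (\<zeta> - (A *v y + b)) \<le> \<theta> * R)"
      by (auto elim!: eventually_mono simp: diff_diff_eq) (metis singletonI)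
  qed
qed

end
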